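(* Let $P$ be a pair of pants. Then $\mathrm{rep}(\pi_1(P),\mathrm{SO}(3))$ is homeomorphic to the quotient of the closed tetrahedron $G\subset\mathbb R^3$ with vertices $(\pi,0,0),(0,\pi,0),(0,0,\pi),(\pi,\pi,\pi)$ by the action of the Klein four-group $V=\{I,I_A,I_B,I_C\}$, where $$I_A(\theta_0,\theta_1,\theta_2)=(\theta_0,\pi-\theta_1,\pi-\theta_2),\quad I_B(\theta_0,\theta_1,\theta_2)=(\pi-\theta_0,\theta_1,\pi-\theta_2),\quad I_C(\theta_0,\theta_1,\theta_2)=(\pi-\theta_0,\pi-\theta_1,\theta_2).$$
   Context: $\mathrm{rep}(\pi_1(P),\mathrm{SO}(3))=\mathrm{Hom}(\pi_1(P),\mathrm{SO}(3))/\mathrm{SO}(3)$ with the conjugation action and quotient topology. $G$ is the set $\{\theta_0+\theta_1+\theta_2\ge\pi,\ \theta_i\le\theta_{i+1}+\theta_{i+2}-\pi,\ i\in\mathbb Z_3\}$; each $I_A,I_B,I_C$ is an involutive rotation of $G$ about an axis through $(\pi/2,\pi/2,\pi/2)$ parallel to a coordinate axis. *)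

theory Defs
  imports "HOL-Analysis.Analysis"
begin

definition rel_class :: "'a topology \<Rightarrow> ('a \<Rightarrow> 'a \<Rightarrow> bool) \<Rightarrow> 'a \<Rightarrow> 'a set" where
  "rel_class X r x = {y \<in> topspace X. r x y}"

definition quotient_topology :: "'a topology \<Rightarrow> ('a \<Rightarrow> 'a \<Rightarrow> bool) \<Rightarrow> 'a set topology" where
  "quotient_topology X r = topology (\<lambda>U. U \<subseteq> rel_class X r ` topspace X \<and>
      openin X {x \<in> topspace X. rel_class X r x \<in> U})"

lemma istopology_quotient:
  "istopology (\<lambda>U. U \<subseteq> rel_class X r ` topspace X \<and>
      openin X {x \<in> topspace X. rel_class X r x \<in> U})"
proof -
  have i: "{x \<in> topspace X. rel_class X r x \<in> S \<inter> T} =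
        {x \<in> topspace X. rel_class X r x \<in> S} \<inter> {x \<in> topspace X. rel_class X r x \<in> T}"
    for S T :: "'a set set" by blast
  have u: "{x \<in> topspace X. rel_class X r x \<in> \<Union>K} = (\<Union>U\<in>K. {x \<in> topspace X. rel_class X r x \<in> U})"
    for K :: "'a set set set" by blast
  show ?thesis unfolding istopology_def
    by (auto simp only: i u intro!: openin_Int openin_Union)
qed

type_synonym mat3 = "real^3^3"

definition SO3 :: "mat3 set" where
  "SO3 = {A. orthogonal_matrix A \<and> det A = 1}"

text \<open>pi_1 of the pair of pants: <a, b, c | a b c = 1> (free of rank 2, generated by the
  three boundary loops). Hom(pi_1(P), SO(3)) is identified with the triples of images,
  with the subspace topology of SO(3)^3 (compact-open = pointwise on generators).\<close>
definition hom_pants_SO3 :: "(mat3 \<times> mat3 \<times> mat3) set" where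
  "hom_pants_SO3 = {(A, B, C). A \<in> SO3 \<and> B \<in> SO3 \<and> C \<in> SO3 \<and> A ** B ** C = mat 1}"

definition conj_rel :: "(mat3 \<times> mat3 \<times> mat3) \<Rightarrow> (mat3 \<times> mat3 \<times> mat3) \<Rightarrow> bool" where
  "conj_rel = (\<lambda>(A, B, C) (A', B', C'). \<exists>g \<in> SO3.
      A' = g ** A ** matrix_inv g \<and> B' = g ** B ** matrix_inv g \<and> C' = g ** C ** matrix_inv g)"

definition rep_pants_SO3 :: "(mat3 \<times> mat3 \<times> mat3) set topology" where
  "rep_pants_SO3 = quotient_topology (subtopology euclidean hom_pants_SO3) conj_rel"

definition tetG :: "(real \<times> real \<times> real) set" where
  "tetG = convex hull {(pi, 0, 0), (0, pi, 0), (0, 0, pi), (pi, pi, pi)}"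

definition I_A :: "real \<times> real \<times> real \<Rightarrow> real \<times> real \<times> real" where
  "I_A = (\<lambda>(t0, t1, t2). (t0, pi - t1, pi - t2))"
definition I_B :: "real \<times> real \<times> real \<Rightarrow> real \<times> real \<times> real" where
  "I_B = (\<lambda>(t0, t1, t2). (pi - t0, t1, pi - t2))"
definition I_C :: "real \<times> real \<times> real \<Rightarrow> real \<times> real \<times> real" where
  "I_C = (\<lambda>(t0, t1, t2). (pi - t0, pi - t1, t2))"

definition klein_rel :: "real \<times> real \<times> real \<Rightarrow> real \<times> real \<times> real \<Rightarrow> bool" where
  "klein_rel x y \<longleftrightarrow> y \<in> {x, I_A x, I_B x, I_C x}"

definition tetG_mod_V :: "(real \<times> real \<times> real) set topology" where
  "tetG_mod_V = quotient_topology (subtopology euclidean tetG) klein_rel"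

end

theory Submission
  imports Defs
begin

text \<open>Every representation (A, B, C), A B C = 1, lifts to unit quaternions p, q with
  A = R(p), B = R(q), unique up to the signs of p and q. Two pairs of unit quaternions are
  simultaneously conjugate iff p, q and p q have the same real parts, because a rotation of R^3
  moves a pair of vectors to any other pair with the same Gram matrix. Writing these real parts
  as cos(\<pi> - \<theta>0), cos \<theta>1, cos \<theta>2 with \<theta>i in [0, \<pi>], the spherical
  triangle inequalities cut out exactly G, and the sign changes of p and q act on \<theta> as V.
  Thus both spaces are quotients of compact spaces by the fibres of one continuous invariant of
  V-orbits, so both are homeomorphic to its image.\<close>

section \<open>Quaternions and rotations\<close>

text \<open>The pair (a, u) encodes the quaternion a + u$1 i + u$2 j + u$3 k.\<close>
type_synonym quat = "real \<times> (real^3)"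

definition quat_mult :: "quat \<Rightarrow> quat \<Rightarrow> quat" where
  "quat_mult p q = (fst p * fst q - snd p \<bullet> snd q,
     fst p *\<^sub>R snd q + fst q *\<^sub>R snd p + cross3 (snd p) (snd q))"

definition quat_cnj :: "quat \<Rightarrow> quat" where
  "quat_cnj p = (fst p, - snd p)"

definition quat_sqnorm :: "quat \<Rightarrow> real" where
  "quat_sqnorm p = fst p * fst p + snd p \<bullet> snd p"

definition quat_rotate :: "quat \<Rightarrow> real^3 \<Rightarrow> real^3" where
  "quat_rotate p x = (fst p * fst p - snd p \<bullet> snd p) *\<^sub>R x + (2 * (snd p \<bullet> x)) *\<^sub>R snd p
     + (2 * fst p) *\<^sub>R cross3 (snd p) x"

definition rot_matrix :: "quat \<Rightarrow> mat3" where
  "rot_matrix p = matrix (quat_rotate p)"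

lemmas coordinates_3 = cross3_def inner_vec_def sum_3 vec_eq_iff forall_3 vector_3

lemma quat_mult_assoc: "quat_mult (quat_mult p q) r = quat_mult p (quat_mult q r)"
  by (simp add: quat_mult_def coordinates_3 algebra_simps prod_eq_iff)

lemma quat_mult_one: "quat_mult (1, 0) p = p" "quat_mult p (1, 0) = p"
  by (simp_all add: quat_mult_def)

lemma quat_mult_cnj: "quat_mult p (quat_cnj p) = (quat_sqnorm p, 0)"
  "quat_mult (quat_cnj p) p = (quat_sqnorm p, 0)"
  by (simp_all add: quat_mult_def quat_cnj_def quat_sqnorm_def coordinates_3 algebra_simps)

lemma quat_cnj_mult: "quat_cnj (quat_mult p q) = quat_mult (quat_cnj q) (quat_cnj p)"
  by (simp add: quat_mult_def quat_cnj_def coordinates_3 algebra_simps prod_eq_iff)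

lemma quat_cnj_minus: "quat_cnj (- p) = - quat_cnj p"
  by (simp add: quat_cnj_def)

lemma quat_mult_minus: "quat_mult (- p) q = - quat_mult p q" "quat_mult p (- q) = - quat_mult p q"
  by (simp_all add: quat_mult_def coordinates_3 algebra_simps)

lemma quat_sqnorm_mult: "quat_sqnorm (quat_mult p q) = quat_sqnorm p * quat_sqnorm q"
  by (simp add: quat_mult_def quat_sqnorm_def coordinates_3 algebra_simps)

lemma quat_sqnorm_cnj: "quat_sqnorm (quat_cnj p) = quat_sqnorm p"
  by (simp add: quat_sqnorm_def quat_cnj_def)

lemma quat_sqnorm_minus: "quat_sqnorm (- p) = quat_sqnorm p"
  by (simp add: quat_sqnorm_def)

lemma quat_sqnorm_scaleR: "quat_sqnorm (c *\<^sub>R p) = (c * c) * quat_sqnorm p"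
  by (simp add: quat_sqnorm_def algebra_simps)

lemma quat_sqnorm_eq_1_iff: "quat_sqnorm p = 1 \<longleftrightarrow> norm p = 1"
proof -
  have "quat_sqnorm p = (norm p)\<^sup>2"
    by (cases p) (simp add: quat_sqnorm_def norm_Pair dot_square_norm power2_eq_square)
  then show ?thesis using norm_ge_zero[of p] by (smt (verit) power2_eq_1_iff)
qed

lemma quat_conj_by_unit: "quat_mult (quat_mult s (a, x)) (quat_cnj s) = (quat_sqnorm s * a, quat_rotate s x)"
  by (simp add: quat_mult_def quat_cnj_def quat_rotate_def quat_sqnorm_def coordinates_3
      algebra_simps prod_eq_iff)

lemma quat_rotate_mult: "quat_rotate (quat_mult p q) x = quat_rotate p (quat_rotate q x)"
  by (simp add: quat_rotate_def quat_mult_def coordinates_3 algebra_simps)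

lemma quat_rotate_inner:
  assumes "quat_sqnorm s = 1" shows "quat_rotate s x \<bullet> quat_rotate s y = x \<bullet> y"
proof -
  have "quat_rotate s x \<bullet> quat_rotate s y = (quat_sqnorm s * quat_sqnorm s) * (x \<bullet> y)"
    by (simp add: quat_rotate_def quat_sqnorm_def coordinates_3 algebra_simps)
  then show ?thesis using assms by simp
qed

lemma linear_quat_rotate: "linear (quat_rotate p)"
  by (rule linearI) (simp_all add: quat_rotate_def coordinates_3 algebra_simps)

lemma rot_matrix_mult_vec: "rot_matrix p *v x = quat_rotate p x"
  unfolding rot_matrix_def by (simp add: matrix_works linear_quat_rotate)

lemma rot_matrix_mult: "rot_matrix (quat_mult p q) = rot_matrix p ** rot_matrix q"
  by (simp add: matrix_eq rot_matrix_mult_vec matrix_vector_mul_assoc[symmetric] quat_rotate_mult)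

lemma rot_matrix_one: "rot_matrix (1, 0) = mat 1"
  by (simp add: matrix_eq rot_matrix_mult_vec quat_rotate_def)

lemma rot_matrix_entries:
  "rot_matrix (a,u) $1$1 = a*a - u\<bullet>u + 2*(u$1*u$1)" "rot_matrix (a,u) $1$2 = 2*(u$1*u$2) - 2*a*u$3"
  "rot_matrix (a,u) $1$3 = 2*(u$1*u$3) + 2*a*u$2" "rot_matrix (a,u) $2$1 = 2*(u$1*u$2) + 2*a*u$3"
  "rot_matrix (a,u) $2$2 = a*a - u\<bullet>u + 2*(u$2*u$2)" "rot_matrix (a,u) $2$3 = 2*(u$2*u$3) - 2*a*u$1"
  "rot_matrix (a,u) $3$1 = 2*(u$1*u$3) - 2*a*u$2" "rot_matrix (a,u) $3$2 = 2*(u$2*u$3) + 2*a*u$1"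
  "rot_matrix (a,u) $3$3 = a*a - u\<bullet>u + 2*(u$3*u$3)"
  by (simp_all add: rot_matrix_def matrix_def axis_def quat_rotate_def coordinates_3 algebra_simps)

lemma rot_matrix_scaleR: "rot_matrix (c *\<^sub>R p) = (c * c) *\<^sub>R rot_matrix p"
  by (cases p) (simp add: rot_matrix_entries vec_eq_iff forall_3 algebra_simps inner_commute)

lemma rot_matrix_minus: "rot_matrix (- p) = rot_matrix p"
  using rot_matrix_scaleR[of "-1" p] by simp

lemma transpose_rot_matrix: "transpose (rot_matrix p) = rot_matrix (quat_cnj p)"
  by (simp add: rot_matrix_def transpose_def matrix_def axis_def quat_rotate_def quat_cnj_def
      coordinates_3 algebra_simps)

lemma det_rot_matrix: "det (rot_matrix p) = quat_sqnorm p ^ 3"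
  by (simp add: det_3 rot_matrix_def matrix_def axis_def quat_rotate_def quat_sqnorm_def
      coordinates_3 algebra_simps power3_eq_cube)

lemma trace_rot_matrix:
  "rot_matrix p $1$1 + rot_matrix p $2$2 + rot_matrix p $3$3 = 3 * fst p * fst p - snd p \<bullet> snd p"
  by (simp add: rot_matrix_def matrix_def axis_def quat_rotate_def coordinates_3 algebra_simps)

lemma rot_matrix_cnj_mult:
  assumes "quat_sqnorm p = 1"
  shows "rot_matrix (quat_cnj p) ** rot_matrix p = mat 1" "rot_matrix p ** rot_matrix (quat_cnj p) = mat 1"
  using assms by (simp_all add: rot_matrix_mult[symmetric] quat_mult_cnj rot_matrix_one)

lemma rot_matrix_in_SO3: "quat_sqnorm p = 1 \<Longrightarrow> rot_matrix p \<in> SO3"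
  using rot_matrix_cnj_mult unfolding SO3_def orthogonal_matrix_def
  by (simp add: transpose_rot_matrix det_rot_matrix)

lemma SO3_mult: "A \<in> SO3 \<Longrightarrow> B \<in> SO3 \<Longrightarrow> A ** B \<in> SO3"
  unfolding SO3_def by (simp add: orthogonal_matrix_mul det_mul)

lemma matrix_inv_SO3:
  assumes "g \<in> SO3" shows "matrix_inv g = transpose g"
proof -
  have o: "g ** transpose g = mat 1" "transpose g ** g = mat 1"
    using assms unfolding SO3_def orthogonal_matrix_def by auto
  have "g ** matrix_inv g = mat 1 \<and> matrix_inv g ** g = mat 1"
    unfolding matrix_inv_def by (rule someI[of _ "transpose g"]) (simp add: o)
  then have inv: "g ** matrix_inv g = mat 1" by simp
  have "matrix_inv g = (transpose g ** g) ** matrix_inv g" by (simp add: o)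
  also have "\<dots> = transpose g ** (g ** matrix_inv g)" by (simp add: matrix_mul_assoc)
  also have "\<dots> = transpose g" by (simp add: inv)
  finally show ?thesis .
qed

lemma matrix_inv_rot_matrix: "quat_sqnorm s = 1 \<Longrightarrow> matrix_inv (rot_matrix s) = rot_matrix (quat_cnj s)"
  by (simp add: matrix_inv_SO3 rot_matrix_in_SO3 transpose_rot_matrix)

section \<open>Unit quaternions cover SO(3) twice\<close>

lemma SO3_entry_equations:
  assumes "M \<in> SO3"
  shows "M$1$1*M$1$1+M$1$2*M$1$2+M$1$3*M$1$3 = 1" "M$2$1*M$2$1+M$2$2*M$2$2+M$2$3*M$2$3 = 1"
    "M$3$1*M$3$1+M$3$2*M$3$2+M$3$3*M$3$3 = 1"
    "M$1$1*M$2$1+M$1$2*M$2$2+M$1$3*M$2$3 = 0" "M$1$1*M$3$1+M$1$2*M$3$2+M$1$3*M$3$3 = 0"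
    "M$2$1*M$3$1+M$2$2*M$3$2+M$2$3*M$3$3 = 0"
    "M$1$1*(M$2$2*M$3$3 - M$2$3*M$3$2) - M$1$2*(M$2$1*M$3$3 - M$2$3*M$3$1)
      + M$1$3*(M$2$1*M$3$2 - M$2$2*M$3$1) = 1"
proof -
  have o: "(M ** transpose M) $i$j = (mat 1 :: mat3) $i$j" for i j
    using assms unfolding SO3_def orthogonal_matrix_def by auto
  note entry = o[unfolded matrix_matrix_mult_def transpose_def mat_def, simplified, unfolded sum_3]
  show "M$1$1*M$1$1+M$1$2*M$1$2+M$1$3*M$1$3 = 1" "M$2$1*M$2$1+M$2$2*M$2$2+M$2$3*M$2$3 = 1"
    "M$3$1*M$3$1+M$3$2*M$3$2+M$3$3*M$3$3 = 1"
    "M$1$1*M$2$1+M$1$2*M$2$2+M$1$3*M$2$3 = 0" "M$1$1*M$3$1+M$1$2*M$3$2+M$1$3*M$3$3 = 0"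
    "M$2$1*M$3$1+M$2$2*M$3$2+M$2$3*M$3$3 = 0"
    using entry[of 1 1] entry[of 2 2] entry[of 3 3] entry[of 1 2] entry[of 1 3] entry[of 2 3]
    by simp_all
  show "M$1$1*(M$2$2*M$3$3 - M$2$3*M$3$2) - M$1$2*(M$2$1*M$3$3 - M$2$3*M$3$1)
      + M$1$3*(M$2$1*M$3$2 - M$2$2*M$3$1) = 1"
    using assms by (simp add: SO3_def det_3 algebra_simps)
qed

lemma orthonormal_row_eq_cross:
  fixes a b c d e f g h i :: real
  assumes "a*a+b*b+c*c = 1" "d*d+e*e+f*f = 1" "g*g+h*h+i*i = 1" "d*g+e*h+f*i = 0"
    and "a*(e*i - f*h) - b*(d*i - f*g) + c*(d*h - e*g) = 1"
  shows "a = e*i - f*h" "b = f*g - d*i" "c = d*h - e*g"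
proof -
  have "(a - (e*i - f*h))\<^sup>2 + (b - (f*g - d*i))\<^sup>2 + (c - (d*h - e*g))\<^sup>2 = 0"
    using assms unfolding power2_eq_square by algebra
  then show "a = e*i - f*h" "b = f*g - d*i" "c = d*h - e*g"
    by (simp_all add: sum_power2_eq_zero_iff add_nonneg_eq_0_iff)
qed

lemma orthonormal_rows_eq_cross:
  fixes a b c d e f g h i :: real
  assumes r1: "a*a+b*b+c*c = 1" and r2: "d*d+e*e+f*f = 1" and r3: "g*g+h*h+i*i = 1"
    and o1: "a*d+b*e+c*f = 0" and o2: "a*g+b*h+c*i = 0" and o3: "d*g+e*h+f*i = 0"
    and dt: "a*(e*i - f*h) - b*(d*i - f*g) + c*(d*h - e*g) = 1"
  shows "a = e*i - f*h" "b = f*g - d*i" "c = d*h - e*g"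
    "d = h*c - i*b" "e = i*a - g*c" "f = g*b - h*a"
    "g = b*f - c*e" "h = c*d - a*f" "i = a*e - b*d"
proof -
  have "g*a+h*b+i*c = 0" "d*(h*c - i*b) - e*(g*c - i*a) + f*(g*b - h*a) = 1"
    "g*(b*f - c*e) - h*(a*f - c*d) + i*(a*e - b*d) = 1"
    using o2 dt by algebra+
  then show "a = e*i - f*h" "b = f*g - d*i" "c = d*h - e*g"
    "d = h*c - i*b" "e = i*a - g*c" "f = g*b - h*a"
    "g = b*f - c*e" "h = c*d - a*f" "i = a*e - b*d"
    using orthonormal_row_eq_cross[OF r1 r2 r3 o3 dt] orthonormal_row_eq_cross[OF r2 r3 r1]
      orthonormal_row_eq_cross[OF r3 r1 r2 o1] by auto
qed

text \<open>With t = 1 + tr M and k = (h - f, c - g, d - b), these identities say that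
  R(t, k) = 4 t M: the classical formula for a quaternion of a rotation matrix.\<close>
lemma rotation_quaternion_identities:
  fixes a b c d e f g h i :: real
  assumes "a = e*i - f*h" "b = f*g - d*i" "c = d*h - e*g"
    "d = h*c - i*b" "e = i*a - g*c" "f = g*b - h*a"
    "g = b*f - c*e" "h = c*d - a*f" "i = a*e - b*d"
    "a*a+b*b+c*c = 1" "d*d+e*e+f*f = 1" "g*g+h*h+i*i = 1"
    "a*d+b*e+c*f = 0" "a*g+b*h+c*i = 0" "d*g+e*h+f*i = 0"
  defines "t \<equiv> 1 + a + e + i" and "k1 \<equiv> h - f" and "k2 \<equiv> c - g" and "k3 \<equiv> d - b"
  shows "t*t + (k1*k1 + k2*k2 + k3*k3) = 4*t"
    "t*t - (k1*k1 + k2*k2 + k3*k3) + 2*k1*k1 = 4*t*a"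
    "t*t - (k1*k1 + k2*k2 + k3*k3) + 2*k2*k2 = 4*t*e"
    "t*t - (k1*k1 + k2*k2 + k3*k3) + 2*k3*k3 = 4*t*i"
    "2*k1*k2 - 2*t*k3 = 4*t*b" "2*k1*k2 + 2*t*k3 = 4*t*d"
    "2*k1*k3 + 2*t*k2 = 4*t*c" "2*k1*k3 - 2*t*k2 = 4*t*g"
    "2*k2*k3 - 2*t*k1 = 4*t*f" "2*k2*k3 + 2*t*k1 = 4*t*h"
  using assms(1-15) unfolding t_def k1_def k2_def k3_def by algebra+

lemma rot_matrix_surj_trace_pos:
  assumes M: "M \<in> SO3" and pos: "1 + M$1$1 + M$2$2 + M$3$3 > 0"
  shows "\<exists>p. quat_sqnorm p = 1 \<and> rot_matrix p = M"
proof -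
  define t where "t = 1 + M$1$1 + M$2$2 + M$3$3"
  define k :: "real^3" where "k = vector [M$3$2 - M$2$3, M$1$3 - M$3$1, M$2$1 - M$1$2]"
  note E = SO3_entry_equations[OF M]
  note I = rotation_quaternion_identities[OF orthonormal_rows_eq_cross[OF E] E(1-6), folded t_def]
  have R: "rot_matrix (t, k) = (4*t) *\<^sub>R M"
    using I by (simp add: k_def rot_matrix_entries vec_eq_iff forall_3 coordinates_3 algebra_simps)
  have N: "quat_sqnorm (t, k) = 4*t"
    using I(1) by (simp add: k_def quat_sqnorm_def coordinates_3 algebra_simps)
  define c where "c = 1 / (2 * sqrt t)"
  have c: "c * c * (4*t) = 1" using pos unfolding c_def t_def by (simp add: field_simps)
  show ?thesis
  proof (intro exI conjI)
    show "quat_sqnorm (c *\<^sub>R (t, k)) = 1"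
      unfolding quat_sqnorm_scaleR N using c by simp
    show "rot_matrix (c *\<^sub>R (t, k)) = M"
      unfolding rot_matrix_scaleR R using c by simp
  qed
qed

text \<open>The four numbers 1 + M11 + M22 + M33, 1 + M11 - M22 - M33, ... sum to 4, so one of them
  is positive; multiplying M by the half-turn R(e i) moves the i-th one into the trace.\<close>
lemma rot_matrix_surj:
  assumes M: "M \<in> SO3" shows "\<exists>p. quat_sqnorm p = 1 \<and> rot_matrix p = M"
proof -
  have lift_via: "\<exists>p. quat_sqnorm p = 1 \<and> rot_matrix p = M"
    if e: "quat_sqnorm e = 1" and pos: "1 + (rot_matrix e ** M)$1$1 + (rot_matrix e ** M)$2$2
      + (rot_matrix e ** M)$3$3 > 0" for e
  proof -
    obtain p where p: "quat_sqnorm p = 1" "rot_matrix p = rot_matrix e ** M"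
      using rot_matrix_surj_trace_pos[OF SO3_mult[OF rot_matrix_in_SO3[OF e] M] pos] by blast
    have "rot_matrix (quat_mult (quat_cnj e) p) = M"
      by (simp add: rot_matrix_mult p matrix_mul_assoc rot_matrix_cnj_mult[OF e])
    moreover have "quat_sqnorm (quat_mult (quat_cnj e) p) = 1"
      by (simp add: quat_sqnorm_mult quat_sqnorm_cnj e p)
    ultimately show ?thesis by blast
  qed
  define e where "e i = (0::real, axis i 1 :: real^3)" for i
  have e: "quat_sqnorm (e i) = 1" for i by (simp add: e_def quat_sqnorm_def)
  have tr: "1 + (rot_matrix (e 1) ** M)$1$1 + (rot_matrix (e 1) ** M)$2$2 + (rot_matrix (e 1) ** M)$3$3
      = 1 + M$1$1 - M$2$2 - M$3$3"
    "1 + (rot_matrix (e 2) ** M)$1$1 + (rot_matrix (e 2) ** M)$2$2 + (rot_matrix (e 2) ** M)$3$3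
      = 1 - M$1$1 + M$2$2 - M$3$3"
    "1 + (rot_matrix (e 3) ** M)$1$1 + (rot_matrix (e 3) ** M)$2$2 + (rot_matrix (e 3) ** M)$3$3
      = 1 - M$1$1 - M$2$2 + M$3$3"
    by (simp_all add: e_def rot_matrix_entries matrix_matrix_mult_def sum_3 axis_def inner_vec_def)
  consider "1 + M$1$1 + M$2$2 + M$3$3 > 0" | "1 + M$1$1 - M$2$2 - M$3$3 > 0"
    | "1 - M$1$1 + M$2$2 - M$3$3 > 0" | "1 - M$1$1 - M$2$2 + M$3$3 > 0"
    by linarith
  then show ?thesis
  proof cases
    case 1 then show ?thesis by (rule rot_matrix_surj_trace_pos[OF M])
  next
    case 2 then show ?thesis using lift_via[OF e[of 1]] tr(1) by simp
  next
    case 3 then show ?thesis using lift_via[OF e[of 2]] tr(2) by simp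
  next
    case 4 then show ?thesis using lift_via[OF e[of 3]] tr(3) by simp
  qed
qed

lemma rot_matrix_eq_mat_1:
  assumes r: "quat_sqnorm r = 1" and R: "rot_matrix r = mat 1" shows "r = (1, 0) \<or> r = (-1, 0)"
proof -
  have tr: "3 * fst r * fst r - snd r \<bullet> snd r = 3"
    using R trace_rot_matrix[of r] by (simp add: mat_def)
  have n: "fst r * fst r + snd r \<bullet> snd r = 1" using r by (simp add: quat_sqnorm_def)
  have "snd r \<bullet> snd r = 0" "fst r * fst r = 1" using tr n by linarith+
  then show ?thesis by (cases r) (auto simp: square_eq_1_iff)
qed

lemma rot_matrix_eq_iff_sign:
  assumes p: "quat_sqnorm p = 1" and q: "quat_sqnorm q = 1" and e: "rot_matrix p = rot_matrix q"
  shows "q = p \<or> q = - p"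
proof -
  define r where "r = quat_mult (quat_cnj p) q"
  have "rot_matrix r = mat 1"
    unfolding r_def rot_matrix_mult e[symmetric] using rot_matrix_cnj_mult[OF p] by simp
  moreover have "quat_sqnorm r = 1" unfolding r_def by (simp add: quat_sqnorm_mult quat_sqnorm_cnj p q)
  ultimately have "r = (1, 0) \<or> r = (-1, 0)" by (rule rot_matrix_eq_mat_1[rotated])
  moreover have "q = quat_mult p r"
    unfolding r_def by (simp add: quat_mult_assoc[symmetric] quat_mult_cnj p quat_mult_one)
  ultimately show ?thesis by (cases p) (auto simp: quat_mult_def)
qed

section \<open>Simultaneous conjugacy of pairs of unit quaternions\<close>

lemma orthogonal_to_two_exists:
  fixes x y :: "real^3" obtains b where "b \<noteq> 0" "b \<bullet> x = 0" "b \<bullet> y = 0"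
proof -
  have "dim {x, y} \<le> card {x, y}" by (rule dim_le_card) (auto intro: span_base)
  also have "\<dots> \<le> 2" by (simp add: card_insert_le_m1)
  finally have "dim {x, y} < DIM(real^3)" by simp
  then obtain b where "b \<noteq> 0" "\<And>z. z \<in> span {x, y} \<Longrightarrow> orthogonal b z"
    using orthogonal_to_subspace_exists by blast
  then show ?thesis using that by (simp add: orthogonal_def span_base)
qed

definition half_turn :: "real^3 \<Rightarrow> quat" where
  "half_turn w = (0, (1 / norm w) *\<^sub>R w)"

lemma quat_sqnorm_half_turn: "w \<noteq> 0 \<Longrightarrow> quat_sqnorm (half_turn w) = 1"
  by (simp add: half_turn_def quat_sqnorm_def power2_norm_eq_inner[symmetric] field_simps)

lemma quat_rotate_half_turn:
  assumes "w \<noteq> 0" shows "quat_rotate (half_turn w) x = (2 * (w \<bullet> x) / (w \<bullet> w)) *\<^sub>R w - x"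
proof -
  have "norm w * norm w = w \<bullet> w" by (simp add: power2_norm_eq_inner[symmetric] power2_eq_square)
  then show ?thesis using assms by (simp add: half_turn_def quat_rotate_def field_simps inner_commute)
qed

lemma half_turn_swaps:
  assumes "u \<bullet> u = v \<bullet> v" "u + v \<noteq> 0" shows "quat_rotate (half_turn (u + v)) u = v"
proof -
  have "(u + v) \<bullet> (u + v) = 2 * ((u + v) \<bullet> u)" using assms(1) by (simp add: algebra_simps inner_commute)
  moreover have "(u + v) \<bullet> (u + v) \<noteq> 0" using assms(2) by simp
  ultimately show ?thesis using assms(2) by (simp add: quat_rotate_half_turn field_simps)
qed

lemma half_turn_orthogonal: "b \<noteq> 0 \<Longrightarrow> b \<bullet> u = 0 \<Longrightarrow> quat_rotate (half_turn b) u = - u"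
  by (simp add: quat_rotate_half_turn)

lemma rotation_to_vector:
  assumes "u \<bullet> u = v \<bullet> v" shows "\<exists>s. quat_sqnorm s = 1 \<and> quat_rotate s u = v"
proof (cases "u + v = 0")
  case False
  then show ?thesis using half_turn_swaps[OF assms] quat_sqnorm_half_turn by blast
next
  case True
  obtain b where "b \<noteq> 0" "b \<bullet> u = 0" by (rule orthogonal_to_two_exists)
  then show ?thesis using half_turn_orthogonal[of b u] quat_sqnorm_half_turn True
    by (metis add_eq_0_iff)
qed

text \<open>Two half-turns about axes orthogonal to u: the first reverses u and the second
  restores it while moving v.\<close>
lemma rotation_fixing_vector:
  assumes "u \<bullet> v = u \<bullet> v'" and "v \<bullet> v = v' \<bullet> v'"
  shows "\<exists>s. quat_sqnorm s = 1 \<and> quat_rotate s u = u \<and> quat_rotate s v = v'"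
proof -
  obtain a where a: "a \<noteq> 0" "a \<bullet> u = 0" by (rule orthogonal_to_two_exists)
  define w where "w = quat_rotate (half_turn a) v"
  have au: "quat_rotate (half_turn a) u = - u" by (rule half_turn_orthogonal[OF a])
  have "w \<bullet> (- u) = v \<bullet> u"
    unfolding w_def au[symmetric] by (rule quat_rotate_inner[OF quat_sqnorm_half_turn[OF a(1)]])
  then have wu: "w \<bullet> u = - (u \<bullet> v')" using assms(1) by (simp add: inner_commute)
  have ww: "w \<bullet> w = v' \<bullet> v'"
    unfolding w_def using quat_rotate_inner[OF quat_sqnorm_half_turn[OF a(1)]] assms(2) by simp
  obtain b where b: "b \<noteq> 0" "b \<bullet> u = 0" "quat_rotate (half_turn b) w = v'"
  proof (cases "w + v' = 0")
    case False
    moreover have "(w + v') \<bullet> u = 0" using wu by (simp add: inner_commute algebra_simps)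
    ultimately show ?thesis using that half_turn_swaps[OF ww] by blast
  next
    case True
    obtain b where "b \<noteq> 0" "b \<bullet> u = 0" "b \<bullet> w = 0" by (rule orthogonal_to_two_exists)
    then show ?thesis using that half_turn_orthogonal[of b w] True by (metis add_eq_0_iff)
  qed
  have bu: "quat_rotate (half_turn b) (- u) = u" using half_turn_orthogonal[OF b(1), of "- u"] b(2) by simp
  show ?thesis
  proof (intro exI conjI)
    show "quat_sqnorm (quat_mult (half_turn b) (half_turn a)) = 1"
      by (simp add: quat_sqnorm_mult quat_sqnorm_half_turn a b)
    show "quat_rotate (quat_mult (half_turn b) (half_turn a)) u = u" by (simp add: quat_rotate_mult au bu)
    show "quat_rotate (quat_mult (half_turn b) (half_turn a)) v = v'"
      by (simp add: quat_rotate_mult b(3) w_def[symmetric])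
  qed
qed

lemma rotation_to_pair:
  assumes "u \<bullet> u = u' \<bullet> u'" "v \<bullet> v = v' \<bullet> v'" "u \<bullet> v = u' \<bullet> v'"
  shows "\<exists>s. quat_sqnorm s = 1 \<and> quat_rotate s u = u' \<and> quat_rotate s v = v'"
proof -
  obtain s1 where s1: "quat_sqnorm s1 = 1" "quat_rotate s1 u = u'"
    using rotation_to_vector[OF assms(1)] by blast
  have "u' \<bullet> quat_rotate s1 v = u' \<bullet> v'" "quat_rotate s1 v \<bullet> quat_rotate s1 v = v' \<bullet> v'"
    using quat_rotate_inner[OF s1(1)] s1(2) assms(2,3) by metis+
  then obtain s2 where s2: "quat_sqnorm s2 = 1" "quat_rotate s2 u' = u'" "quat_rotate s2 (quat_rotate s1 v) = v'"
    using rotation_fixing_vector by blast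
  show ?thesis
  proof (intro exI conjI)
    show "quat_sqnorm (quat_mult s2 s1) = 1" by (simp add: quat_sqnorm_mult s1 s2)
    show "quat_rotate (quat_mult s2 s1) u = u'" "quat_rotate (quat_mult s2 s1) v = v'"
      by (simp_all add: quat_rotate_mult s1 s2)
  qed
qed

definition quat_conj_by :: "quat \<Rightarrow> quat \<Rightarrow> quat" where
  "quat_conj_by s p = quat_mult (quat_mult s p) (quat_cnj s)"

lemma fst_quat_conj_by: "quat_sqnorm s = 1 \<Longrightarrow> fst (quat_conj_by s p) = fst p"
  using quat_conj_by_unit[of s "fst p" "snd p"] by (simp add: quat_conj_by_def)

lemma quat_sqnorm_conj_by: "quat_sqnorm s = 1 \<Longrightarrow> quat_sqnorm (quat_conj_by s p) = quat_sqnorm p"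
  by (simp add: quat_conj_by_def quat_sqnorm_mult quat_sqnorm_cnj)

lemma quat_conj_by_mult:
  assumes "quat_sqnorm s = 1"
  shows "quat_mult (quat_conj_by s p) (quat_conj_by s q) = quat_conj_by s (quat_mult p q)"
proof -
  have "quat_mult (quat_conj_by s p) (quat_conj_by s q)
      = quat_mult (quat_mult s p) (quat_mult (quat_mult (quat_cnj s) s) (quat_mult q (quat_cnj s)))"
    by (simp add: quat_conj_by_def quat_mult_assoc)
  also have "\<dots> = quat_conj_by s (quat_mult p q)"
    using assms by (simp add: quat_conj_by_def quat_mult_cnj quat_mult_one quat_mult_assoc)
  finally show ?thesis .
qed

lemma quat_cnj_conj_by: "quat_cnj (quat_conj_by s p) = quat_conj_by s (quat_cnj p)"
  by (simp add: quat_conj_by_def quat_cnj_mult quat_mult_assoc) (simp add: quat_cnj_def)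

lemma rot_matrix_conj_by:
  "quat_sqnorm s = 1 \<Longrightarrow>
    rot_matrix (quat_conj_by s p) = rot_matrix s ** rot_matrix p ** matrix_inv (rot_matrix s)"
  by (simp add: quat_conj_by_def rot_matrix_mult matrix_inv_rot_matrix)

lemma unit_quat_pairs_conjugate:
  assumes p: "quat_sqnorm p = 1" and q: "quat_sqnorm q = 1"
    and p': "quat_sqnorm p' = 1" and q': "quat_sqnorm q' = 1"
    and "fst p = fst p'" "fst q = fst q'" "fst (quat_mult p q) = fst (quat_mult p' q')"
  shows "\<exists>s. quat_sqnorm s = 1 \<and> p' = quat_conj_by s p \<and> q' = quat_conj_by s q"
proof -
  have "snd p \<bullet> snd p = snd p' \<bullet> snd p'" "snd q \<bullet> snd q = snd q' \<bullet> snd q'"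
    "snd p \<bullet> snd q = snd p' \<bullet> snd q'"
    using assms by (simp_all add: quat_sqnorm_def quat_mult_def)
  then obtain s where s: "quat_sqnorm s = 1"
    "quat_rotate s (snd p) = snd p'" "quat_rotate s (snd q) = snd q'"
    using rotation_to_pair by blast
  have "quat_conj_by s x = (fst x, quat_rotate s (snd x))" for x
    using quat_conj_by_unit[of s "fst x" "snd x"] s(1) by (simp add: quat_conj_by_def)
  then show ?thesis using s assms(5,6) by (metis prod.collapse)
qed

section \<open>The tetrahedron G and the angle coordinates\<close>

lemma tetG_eq:
  "tetG = {(a, b, c). a + b + c \<ge> pi \<and> a \<ge> b + c - pi \<and> b \<ge> a + c - pi \<and> c \<ge> a + b - pi}"
  (is "_ = ?H")
proof
  have "?H = {x. inner (-1::real, -1::real, -1::real) x \<le> - pi} \<inter> {x. inner (-1::real, 1::real, 1::real) x \<le> pi}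
      \<inter> {x. inner (1::real, -1::real, 1::real) x \<le> pi} \<inter> {x. inner (1::real, 1::real, -1::real) x \<le> pi}"
    by auto
  then have "convex ?H" by (simp add: convex_Int convex_halfspace_le)
  then show "tetG \<subseteq> ?H" unfolding tetG_def by (rule hull_minimal[rotated]) auto
next
  show "?H \<subseteq> tetG"
  proof
    fix x assume "x \<in> ?H"
    then obtain a b c where x: "x = (a, b, c)"
      and h: "a + b + c \<ge> pi" "a \<ge> b + c - pi" "b \<ge> a + c - pi" "c \<ge> a + b - pi"
      by auto
    define V where "V = [(pi, 0::real, 0::real), (0, pi, 0), (0, 0, pi), (pi, pi, pi)]"
    define l where "l = [(a - b - c + pi) / (2*pi), (b - a - c + pi) / (2*pi),
      (c - a - b + pi) / (2*pi), (a + b + c - pi) / (2*pi)]"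
    define u where "u y = (if y = V!0 then l!0 else if y = V!1 then l!1 else if y = V!2 then l!2 else l!3)"
      for y
    have d: "distinct V" by (simp add: V_def)
    have "\<forall>y\<in>set V. 0 \<le> u y" using h by (auto simp: u_def V_def l_def)
    moreover have "sum u (set V) = 1"
      using d by (simp add: u_def V_def l_def field_simps)
    moreover have "(\<Sum>y\<in>set V. u y *\<^sub>R y) = x"
      using d by (simp add: u_def V_def l_def x field_simps)
    ultimately have "x \<in> convex hull (set V)"
      unfolding convex_hull_finite[OF finite_set] by blast
    then show "x \<in> tetG" by (simp add: tetG_def V_def)
  qed
qed

text \<open>If p = (cos \<alpha>, sin \<alpha> u) then R(p) is the rotation by 2\<alpha> about u; the coordinates
  are the half-angles of R(p), R(q) and R(p q), the first one reflected as \<pi> - \<alpha>.\<close>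
definition pants_angles :: "quat \<Rightarrow> quat \<Rightarrow> real \<times> real \<times> real" where
  "pants_angles p q = (pi - arccos (fst p), arccos (fst q), arccos (fst (quat_mult p q)))"

lemma unit_quat_fst_bounds:
  assumes "quat_sqnorm p = 1" shows "-1 \<le> fst p" "fst p \<le> 1"
proof -
  have "fst p * fst p \<le> 1" using assms inner_ge_zero[of "snd p"] unfolding quat_sqnorm_def by linarith
  then have "\<bar>fst p\<bar> \<le> 1" by (simp add: abs_square_le_1[symmetric] power2_eq_square)
  then show "-1 \<le> fst p" "fst p \<le> 1" by auto
qed

lemma unit_quat_norm_snd:
  assumes "quat_sqnorm p = 1" shows "norm (snd p) = sin (arccos (fst p))"
proof -
  have "snd p \<bullet> snd p = 1 - (fst p)\<^sup>2" using assms by (simp add: quat_sqnorm_def power2_eq_square)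
  then show ?thesis using sin_arccos[OF unit_quat_fst_bounds[OF assms]] by (simp add: norm_eq_sqrt_inner)
qed

lemma le_arccosI: "0 \<le> x \<Longrightarrow> x \<le> pi \<Longrightarrow> -1 \<le> y \<Longrightarrow> y \<le> cos x \<Longrightarrow> x \<le> arccos y"
  using arccos_le_arccos[of y "cos x"] arccos_cos[of x] by simp

lemma arccos_leI: "0 \<le> x \<Longrightarrow> x \<le> pi \<Longrightarrow> y \<le> 1 \<Longrightarrow> cos x \<le> y \<Longrightarrow> arccos y \<le> x"
  using arccos_le_arccos[of "cos x" y] arccos_cos[of x] by simp

lemma arccos_spherical_triangle:
  assumes "0 \<le> \<alpha>" "\<alpha> \<le> pi" "0 \<le> \<beta>" "\<beta> \<le> pi" "-1 \<le> c" "c \<le> 1"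
    and "cos (\<alpha> + \<beta>) \<le> c" "c \<le> cos (\<alpha> - \<beta>)"
  shows "\<bar>\<alpha> - \<beta>\<bar> \<le> arccos c" "arccos c \<le> \<alpha> + \<beta>" "arccos c \<le> 2*pi - \<alpha> - \<beta>"
proof -
  show "\<bar>\<alpha> - \<beta>\<bar> \<le> arccos c" using assms by (intro le_arccosI) auto
  have "arccos c \<le> \<alpha> + \<beta> \<and> arccos c \<le> 2*pi - \<alpha> - \<beta>"
  proof (cases "\<alpha> + \<beta> \<le> pi")
    case True
    then show ?thesis using assms arccos_ubound[of c] arccos_leI[of "\<alpha> + \<beta>" c] by auto
  next
    case False
    have "cos (2*pi - (\<alpha> + \<beta>)) = cos (\<alpha> + \<beta>)" by simp
    then show ?thesis using assms False arccos_leI[of "2*pi - (\<alpha> + \<beta>)" c] by auto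
  qed
  then show "arccos c \<le> \<alpha> + \<beta>" "arccos c \<le> 2*pi - \<alpha> - \<beta>" by auto
qed

lemma cos_spherical_triangle:
  assumes "0 \<le> \<alpha>" "\<alpha> \<le> pi" "0 \<le> \<beta>" "\<beta> \<le> pi" "0 \<le> \<gamma>" "\<gamma> \<le> pi"
    and "\<bar>\<alpha> - \<beta>\<bar> \<le> \<gamma>" "\<gamma> \<le> \<alpha> + \<beta>" "\<gamma> \<le> 2*pi - \<alpha> - \<beta>"
  shows "cos (\<alpha> + \<beta>) \<le> cos \<gamma>" "cos \<gamma> \<le> cos (\<alpha> - \<beta>)"
proof -
  have "cos \<gamma> \<le> cos \<bar>\<alpha> - \<beta>\<bar>" using assms by (intro cos_monotone_0_pi_le) auto
  then show "cos \<gamma> \<le> cos (\<alpha> - \<beta>)" by simp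
  show "cos (\<alpha> + \<beta>) \<le> cos \<gamma>"
  proof (cases "\<alpha> + \<beta> \<le> pi")
    case True
    then show ?thesis using assms by (intro cos_monotone_0_pi_le) auto
  next
    case False
    have "cos (2*pi - (\<alpha> + \<beta>)) \<le> cos \<gamma>" using assms False by (intro cos_monotone_0_pi_le) auto
    then show ?thesis by simp
  qed
qed

lemma pants_angles_in_tetG:
  assumes p: "quat_sqnorm p = 1" and q: "quat_sqnorm q = 1" shows "pants_angles p q \<in> tetG"
proof -
  define \<alpha> where "\<alpha> = arccos (fst p)"
  define \<beta> where "\<beta> = arccos (fst q)"
  define c where "c = fst (quat_mult p q)"
  note pb = unit_quat_fst_bounds[OF p] and qb = unit_quat_fst_bounds[OF q]
  have cb: "-1 \<le> c" "c \<le> 1"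
    using unit_quat_fst_bounds[of "quat_mult p q"] p q unfolding c_def by (auto simp: quat_sqnorm_mult)
  have a: "0 \<le> \<alpha>" "\<alpha> \<le> pi" and b: "0 \<le> \<beta>" "\<beta> \<le> pi"
    using arccos_bounded pb qb unfolding \<alpha>_def \<beta>_def by auto
  have "cos \<alpha> = fst p" "cos \<beta> = fst q" "sin \<alpha> = norm (snd p)" "sin \<beta> = norm (snd q)"
    using pb qb unit_quat_norm_snd[OF p] unit_quat_norm_snd[OF q] unfolding \<alpha>_def \<beta>_def by auto
  moreover have "c = fst p * fst q - snd p \<bullet> snd q" by (simp add: c_def quat_mult_def)
  moreover note Cauchy_Schwarz_ineq2[of "snd p" "snd q"]
  ultimately have "cos (\<alpha> + \<beta>) \<le> c" "c \<le> cos (\<alpha> - \<beta>)" by (simp_all add: cos_add cos_diff)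
  note T = arccos_spherical_triangle[OF a b cb this]
  have "pants_angles p q = (pi - \<alpha>, \<beta>, arccos c)" by (simp add: pants_angles_def \<alpha>_def \<beta>_def c_def)
  then show ?thesis using T a b by (auto simp: tetG_eq)
qed

lemma pants_angles_surj:
  assumes "\<theta> \<in> tetG" shows "\<exists>p q. quat_sqnorm p = 1 \<and> quat_sqnorm q = 1 \<and> pants_angles p q = \<theta>"
proof -
  obtain t0 t1 t2 where \<theta>: "\<theta> = (t0, t1, t2)" by (cases \<theta>) auto
  define \<alpha> where "\<alpha> = pi - t0"
  have h: "0 \<le> \<alpha>" "\<alpha> \<le> pi" "0 \<le> t1" "t1 \<le> pi" "0 \<le> t2" "t2 \<le> pi"
    "\<bar>\<alpha> - t1\<bar> \<le> t2" "t2 \<le> \<alpha> + t1" "t2 \<le> 2*pi - \<alpha> - t1"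
    using assms unfolding \<theta> tetG_eq \<alpha>_def by auto
  define A where "A = cos \<alpha> * cos t1"
  define S where "S = sin \<alpha> * sin t1"
  have "S \<ge> 0" using h sin_ge_zero unfolding S_def by simp
  have "A - S \<le> cos t2" "cos t2 \<le> A + S"
    using cos_spherical_triangle[OF h] by (simp_all add: cos_add cos_diff A_def S_def)
  obtain t where t: "-1 \<le> t" "t \<le> 1" "A - S * t = cos t2"
  proof (cases "S = 0")
    case True then show ?thesis using that[of 0] \<open>A - S \<le> cos t2\<close> \<open>cos t2 \<le> A + S\<close> by auto
  next
    case False
    then have "S > 0" using \<open>S \<ge> 0\<close> by simp
    then show ?thesis
      using that[of "(A - cos t2) / S"] \<open>A - S \<le> cos t2\<close> \<open>cos t2 \<le> A + S\<close>
      by (simp add: field_simps)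
  qed
  define p :: quat where "p = (cos \<alpha>, vector [sin \<alpha>, 0, 0])"
  define q :: quat where "q = (cos t1, vector [sin t1 * t, sin t1 * sqrt (1 - t*t), 0])"
  have "t * t \<le> 1" using t abs_square_le_1[of t] by (simp add: power2_eq_square abs_le_iff)
  then have "quat_sqnorm q = (cos t1)\<^sup>2 + (sin t1)\<^sup>2"
    by (simp add: q_def quat_sqnorm_def coordinates_3 power2_eq_square algebra_simps)
  moreover have "quat_sqnorm p = 1"
    by (simp add: p_def quat_sqnorm_def coordinates_3 power2_eq_square[symmetric])
  moreover have "fst (quat_mult p q) = cos t2"
    using t(3) by (simp add: p_def q_def quat_mult_def coordinates_3 A_def S_def algebra_simps)
  moreover have "pants_angles p q = (pi - \<alpha>, t1, t2)"
    using calculation(3) h by (simp add: pants_angles_def p_def q_def arccos_cos)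
  ultimately have "quat_sqnorm p = 1 \<and> quat_sqnorm q = 1 \<and> pants_angles p q = \<theta>"
    by (simp add: \<theta> \<alpha>_def)
  then show ?thesis by blast
qed

lemma pants_angles_minus:
  assumes p: "quat_sqnorm p = 1" and q: "quat_sqnorm q = 1"
  shows "pants_angles (- p) q = I_B (pants_angles p q)" "pants_angles p (- q) = I_A (pants_angles p q)"
    "pants_angles (- p) (- q) = I_C (pants_angles p q)"
  using unit_quat_fst_bounds[OF p] unit_quat_fst_bounds[OF q]
    unit_quat_fst_bounds[of "quat_mult p q"]
  by (simp_all add: pants_angles_def I_A_def I_B_def I_C_def quat_mult_minus arccos_minus
      quat_sqnorm_mult p q)

lemma pants_angles_eqD:
  assumes "quat_sqnorm p = 1" "quat_sqnorm q = 1" "quat_sqnorm p' = 1" "quat_sqnorm q' = 1"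
    and "pants_angles p q = pants_angles p' q'"
  shows "fst p = fst p'" "fst q = fst q'" "fst (quat_mult p q) = fst (quat_mult p' q')"
proof -
  have "\<bar>fst u\<bar> \<le> 1" if "u \<in> {p, q, p', q', quat_mult p q, quat_mult p' q'}" for u
    using that assms(1-4) unit_quat_fst_bounds[of u] by (auto simp: quat_sqnorm_mult)
  then show "fst p = fst p'" "fst q = fst q'" "fst (quat_mult p q) = fst (quat_mult p' q')"
    using assms(5) by (simp_all add: pants_angles_def arccos_eq_iff)
qed

lemma pants_angles_conj_by:
  "quat_sqnorm s = 1 \<Longrightarrow> pants_angles (quat_conj_by s p) (quat_conj_by s q) = pants_angles p q"
  by (simp add: pants_angles_def quat_conj_by_mult fst_quat_conj_by)

lemma I_ABC_simps:
  "I_A (a, b, c) = (a, pi - b, pi - c)" "I_B (a, b, c) = (pi - a, b, pi - c)"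
  "I_C (a, b, c) = (pi - a, pi - b, c)"
  by (simp_all add: I_A_def I_B_def I_C_def)

lemma klein_rel_pants_angles_signs:
  assumes "quat_sqnorm p = 1" "quat_sqnorm q = 1" "p' = p \<or> p' = - p" "q' = q \<or> q' = - q"
  shows "klein_rel (pants_angles p q) (pants_angles p' q')"
  using assms pants_angles_minus[OF assms(1,2)] by (auto simp: klein_rel_def)

lemma klein_rel_pants_anglesE:
  assumes "quat_sqnorm p = 1" "quat_sqnorm q = 1" "klein_rel (pants_angles p q) y"
  obtains p' q' where "p' = p \<or> p' = - p" "q' = q \<or> q' = - q" "y = pants_angles p' q'"
  using assms pants_angles_minus[OF assms(1,2)] unfolding klein_rel_def by (metis insertE singletonD)

lemma sign_changes_of_squares_and_product:
  fixes x y z x' y' z' :: real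
  assumes "x'\<^sup>2 = x\<^sup>2" "y'\<^sup>2 = y\<^sup>2" "z'\<^sup>2 = z\<^sup>2" "x' * y' * z' = x * y * z"
  shows "(x' = x \<and> y' = y \<and> z' = z) \<or> (x' = x \<and> y' = - y \<and> z' = - z)
    \<or> (x' = - x \<and> y' = y \<and> z' = - z) \<or> (x' = - x \<and> y' = - y \<and> z' = z)"
proof -
  have "x' = x \<or> x' = - x" "y' = y \<or> y' = - y" "z' = z \<or> z' = - z"
    using assms(1-3) by (simp_all add: power2_eq_iff)
  moreover have "x * y * z = - (x * y * z) \<Longrightarrow> x = 0 \<or> y = 0 \<or> z = 0" by simp
  ultimately show ?thesis using assms(4) by (elim disjE) auto
qed

text \<open>In coordinates centred at (\<pi>/2, \<pi>/2, \<pi>/2), V acts by the sign changes of two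
  coordinates; the squares and the triple product separate its orbits.\<close>
definition klein_invariant :: "real \<times> real \<times> real \<Rightarrow> real \<times> real \<times> real \<times> real" where
  "klein_invariant x = ((fst x - pi/2)\<^sup>2, (fst (snd x) - pi/2)\<^sup>2, (snd (snd x) - pi/2)\<^sup>2,
     (fst x - pi/2) * (fst (snd x) - pi/2) * (snd (snd x) - pi/2))"

lemma continuous_on_klein_invariant: "continuous_on S klein_invariant"
  unfolding klein_invariant_def by (intro continuous_intros)

lemma klein_rel_iff_invariant: "klein_rel x y \<longleftrightarrow> klein_invariant x = klein_invariant y"
proof -
  obtain a0 a1 a2 b0 b1 b2 where x: "x = (a0, a1, a2)" and y: "y = (b0, b1, b2)"
    by (cases x, cases y) auto
  have m: "pi - t - pi/2 = - (t - pi/2)" for t :: real by simp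
  show ?thesis
  proof
    assume "klein_rel x y"
    then have "y = x \<or> y = I_A x \<or> y = I_B x \<or> y = I_C x" by (simp add: klein_rel_def)
    then show "klein_invariant x = klein_invariant y"
      unfolding x by (elim disjE) (simp_all only: klein_invariant_def I_ABC_simps fst_conv snd_conv
          m power2_minus mult_minus_left mult_minus_right minus_minus)
  next
    assume "klein_invariant x = klein_invariant y"
    then have "(b0 - pi/2)\<^sup>2 = (a0 - pi/2)\<^sup>2" "(b1 - pi/2)\<^sup>2 = (a1 - pi/2)\<^sup>2"
      "(b2 - pi/2)\<^sup>2 = (a2 - pi/2)\<^sup>2"
      "(b0 - pi/2) * (b1 - pi/2) * (b2 - pi/2) = (a0 - pi/2) * (a1 - pi/2) * (a2 - pi/2)"
      by (simp_all add: x y klein_invariant_def)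
    from sign_changes_of_squares_and_product[OF this] show "klein_rel x y"
      unfolding klein_rel_def x y by (elim disjE) (auto simp: I_ABC_simps)
  qed
qed

section \<open>Quotients of compact spaces\<close>

lemma openin_quotient_topology:
  "openin (quotient_topology X r) U \<longleftrightarrow>
    U \<subseteq> rel_class X r ` topspace X \<and> openin X {x \<in> topspace X. rel_class X r x \<in> U}"
  unfolding quotient_topology_def by (simp add: topology_inverse'[OF istopology_quotient])

lemma topspace_quotient_topology: "topspace (quotient_topology X r) = rel_class X r ` topspace X"
proof -
  have "{x \<in> topspace X. rel_class X r x \<in> rel_class X r ` topspace X} = topspace X" by blast
  then have "openin (quotient_topology X r) (rel_class X r ` topspace X)"
    unfolding openin_quotient_topology by simp
  then have "rel_class X r ` topspace X \<subseteq> topspace (quotient_topology X r)"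
    by (rule openin_subset)
  moreover have "topspace (quotient_topology X r) \<subseteq> rel_class X r ` topspace X"
    unfolding topspace_def openin_quotient_topology by blast
  ultimately show ?thesis by blast
qed

lemma quotient_map_rel_class: "quotient_map X (quotient_topology X r) (rel_class X r)"
  unfolding quotient_map_def topspace_quotient_topology openin_quotient_topology by simp

lemma compact_space_quotient_topology:
  assumes "compact_space X" shows "compact_space (quotient_topology X r)"
  using image_compactin[OF _ quotient_imp_continuous_map[OF quotient_map_rel_class]] assms
  by (simp add: compact_space_def topspace_quotient_topology)

lemma quotient_topology_homeomorphic_image:
  assumes X: "compact_space X" and Y: "Hausdorff_space Y" and k: "continuous_map X Y k"
    and r: "\<And>x x'. x \<in> topspace X \<Longrightarrow> x' \<in> topspace X \<Longrightarrow> r x x' \<longleftrightarrow> k x = k x'"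
  shows "quotient_topology X r homeomorphic_space subtopology Y (k ` topspace X)"
proof -
  let ?Q = "quotient_topology X r" and ?c = "rel_class X r"
  have fibre: "?c x = {y \<in> topspace X. k y = k x}" if "x \<in> topspace X" for x
    using r[OF that] by (auto simp: rel_class_def)
  have class_eq: "?c x = ?c x' \<longleftrightarrow> k x = k x'" if "x \<in> topspace X" "x' \<in> topspace X" for x x'
    using that by (auto simp: fibre set_eq_iff)
  define h where "h c = k (SOME x. x \<in> topspace X \<and> ?c x = c)" for c
  have hk: "h (?c x) = k x" if "x \<in> topspace X" for x
  proof -
    have "\<exists>x'. x' \<in> topspace X \<and> ?c x' = ?c x" using that by blast
    then have "(SOME x'. x' \<in> topspace X \<and> ?c x' = ?c x) \<in> topspace X \<and>
        ?c (SOME x'. x' \<in> topspace X \<and> ?c x' = ?c x) = ?c x"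
      by (rule someI_ex)
    then show ?thesis unfolding h_def using class_eq that by blast
  qed
  have "continuous_map ?Q Y h"
  proof (rule continuous_compose_quotient_map[OF quotient_map_rel_class])
    show "continuous_map X Y (h \<circ> ?c)" using k by (rule continuous_map_eq) (simp add: hk)
  qed
  then have cont: "continuous_map ?Q (subtopology Y (k ` topspace X)) h"
    by (auto simp: continuous_map_in_subtopology topspace_quotient_topology hk)
  have img: "h ` topspace ?Q = topspace (subtopology Y (k ` topspace X))"
    using continuous_map_image_subset_topspace[OF k]
    by (auto simp: topspace_quotient_topology image_image hk cong: image_cong)
  have inj: "inj_on h (topspace ?Q)"
    unfolding topspace_quotient_topology inj_on_def using hk class_eq by auto
  have "closed_map ?Q (subtopology Y (k ` topspace X)) h"
    using cont compact_space_quotient_topology[OF X] Y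
    by (simp add: continuous_imp_closed_map Hausdorff_space_subtopology)
  then show ?thesis
    using bijective_closed_imp_homeomorphic_map[OF cont _ img inj] homeomorphic_map_imp_homeomorphic_space
    by blast
qed

section \<open>The representation space of the pair of pants\<close>

definition unit_quat_pairs :: "(quat \<times> quat) set" where
  "unit_quat_pairs = {(p, q). quat_sqnorm p = 1 \<and> quat_sqnorm q = 1}"

definition pants_rep :: "quat \<times> quat \<Rightarrow> mat3 \<times> mat3 \<times> mat3" where
  "pants_rep pq = (rot_matrix (fst pq), rot_matrix (snd pq),
     rot_matrix (quat_cnj (quat_mult (fst pq) (snd pq))))"

definition quat_lift :: "mat3 \<Rightarrow> quat" where
  "quat_lift M = (SOME p. quat_sqnorm p = 1 \<and> rot_matrix p = M)"

definition rep_angles :: "mat3 \<times> mat3 \<times> mat3 \<Rightarrow> real \<times> real \<times> real" where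
  "rep_angles h = pants_angles (quat_lift (fst h)) (quat_lift (fst (snd h)))"

lemma compact_unit_quat_pairs: "compact unit_quat_pairs"
proof -
  have "unit_quat_pairs = sphere 0 1 \<times> sphere 0 1"
    by (auto simp: unit_quat_pairs_def quat_sqnorm_eq_1_iff)
  then show ?thesis by (metis compact_Times compact_sphere)
qed

lemma continuous_on_quat_mult [continuous_intros]:
  fixes S :: "'a::t2_space set"
  shows   "continuous_on S f \<Longrightarrow> continuous_on S g \<Longrightarrow> continuous_on S (\<lambda>x. quat_mult (f x) (g x))"
  unfolding quat_mult_def by (intro continuous_intros continuous_on_cross)

lemma continuous_on_quat_cnj [continuous_intros]:
  fixes S :: "'a::t2_space set"
  shows   "continuous_on S f \<Longrightarrow> continuous_on S (\<lambda>x. quat_cnj (f x))"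
  unfolding quat_cnj_def by (intro continuous_intros)

lemma continuous_on_rot_matrix [continuous_intros]:
  fixes S :: "'a::t2_space set"
  shows   "continuous_on S f \<Longrightarrow> continuous_on S (\<lambda>x. rot_matrix (f x))"
  unfolding rot_matrix_def matrix_def quat_rotate_def by (intro continuous_intros continuous_on_cross)

lemma continuous_on_pants_rep: "continuous_on S pants_rep"
  unfolding pants_rep_def by (intro continuous_intros)

lemma continuous_on_pants_angles: "continuous_on unit_quat_pairs (\<lambda>x. pants_angles (fst x) (snd x))"
proof -
  have "-1 \<le> fst (fst x) \<and> fst (fst x) \<le> 1 \<and> -1 \<le> fst (snd x) \<and> fst (snd x) \<le> 1
      \<and> -1 \<le> fst (quat_mult (fst x) (snd x)) \<and> fst (quat_mult (fst x) (snd x)) \<le> 1"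
    if "x \<in> unit_quat_pairs" for x
    using that unit_quat_fst_bounds[of "fst x"] unit_quat_fst_bounds[of "snd x"]
      unit_quat_fst_bounds[of "quat_mult (fst x) (snd x)"]
    by (auto simp: unit_quat_pairs_def quat_sqnorm_mult)
  then show ?thesis unfolding pants_angles_def by (intro continuous_intros) auto
qed

lemma quat_lift:
  "M \<in> SO3 \<Longrightarrow> quat_sqnorm (quat_lift M) = 1 \<and> rot_matrix (quat_lift M) = M"
  unfolding quat_lift_def by (rule someI_ex) (rule rot_matrix_surj)

lemma quat_lift_rot_matrix:
  assumes "quat_sqnorm p = 1" shows "quat_lift (rot_matrix p) = p \<or> quat_lift (rot_matrix p) = - p"
  using quat_lift[OF rot_matrix_in_SO3[OF assms]] rot_matrix_eq_iff_sign[OF assms] by metis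

lemma pants_rep_in_hom: "x \<in> unit_quat_pairs \<Longrightarrow> pants_rep x \<in> hom_pants_SO3"
  using rot_matrix_cnj_mult(2)[of "quat_mult (fst x) (snd x)"]
  by (auto simp: unit_quat_pairs_def hom_pants_SO3_def pants_rep_def rot_matrix_mult
      rot_matrix_in_SO3 quat_sqnorm_mult quat_sqnorm_cnj)

lemma hom_pants_SO3_lift:
  assumes "h \<in> hom_pants_SO3"
  defines "x \<equiv> (quat_lift (fst h), quat_lift (fst (snd h)))"
  shows "x \<in> unit_quat_pairs" "h = pants_rep x"
proof -
  obtain A B C where h: "h = (A, B, C)" "A \<in> SO3" "B \<in> SO3" "C \<in> SO3" "A ** B ** C = mat 1"
    using assms(1) unfolding hom_pants_SO3_def by auto
  define p q where "p = quat_lift A" and "q = quat_lift B"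
  have p: "quat_sqnorm p = 1" "rot_matrix p = A" and q: "quat_sqnorm q = 1" "rot_matrix q = B"
    using quat_lift h(2,3) unfolding p_def q_def by auto
  have pq: "quat_sqnorm (quat_mult p q) = 1" by (simp add: quat_sqnorm_mult p q)
  have "C = (rot_matrix (quat_cnj (quat_mult p q)) ** rot_matrix (quat_mult p q)) ** C"
    by (simp add: rot_matrix_cnj_mult[OF pq])
  also have "\<dots> = rot_matrix (quat_cnj (quat_mult p q)) ** (A ** B ** C)"
    by (simp add: matrix_mul_assoc rot_matrix_mult p q)
  finally have "C = rot_matrix (quat_cnj (quat_mult p q))" by (simp add: h(5))
  then show "x \<in> unit_quat_pairs" "h = pants_rep x"
    using p q h(1) by (simp_all add: x_def p_def q_def unit_quat_pairs_def pants_rep_def)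
qed

lemma hom_pants_SO3_eq_image: "hom_pants_SO3 = pants_rep ` unit_quat_pairs"
  using hom_pants_SO3_lift pants_rep_in_hom by blast

lemma rep_angles_in_tetG: "h \<in> hom_pants_SO3 \<Longrightarrow> rep_angles h \<in> tetG"
  using hom_pants_SO3_lift(1) pants_angles_in_tetG
  by (auto simp: rep_angles_def unit_quat_pairs_def)

lemma klein_rel_rep_angles_pants_rep:
  "x \<in> unit_quat_pairs \<Longrightarrow> klein_rel (pants_angles (fst x) (snd x)) (rep_angles (pants_rep x))"
  unfolding rep_angles_def pants_rep_def unit_quat_pairs_def
  by (auto intro!: klein_rel_pants_angles_signs quat_lift_rot_matrix)

lemma klein_rel_if_conj_rel_pants_rep:
  assumes p: "quat_sqnorm p = 1" and q: "quat_sqnorm q = 1"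
    and p': "quat_sqnorm p' = 1" and q': "quat_sqnorm q' = 1"
    and "conj_rel (pants_rep (p, q)) (pants_rep (p', q'))"
  shows "klein_rel (pants_angles p q) (pants_angles p' q')"
proof -
  obtain g where g: "g \<in> SO3" "rot_matrix p' = g ** rot_matrix p ** matrix_inv g"
    "rot_matrix q' = g ** rot_matrix q ** matrix_inv g"
    using assms(5) unfolding conj_rel_def pants_rep_def by auto
  obtain s where s: "quat_sqnorm s = 1" "rot_matrix s = g" using rot_matrix_surj[OF g(1)] by blast
  have "rot_matrix p' = rot_matrix (quat_conj_by s p)" "rot_matrix q' = rot_matrix (quat_conj_by s q)"
    using g s by (simp_all add: rot_matrix_conj_by)
  then have "p' = quat_conj_by s p \<or> p' = - quat_conj_by s p"
    "q' = quat_conj_by s q \<or> q' = - quat_conj_by s q"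
    using rot_matrix_eq_iff_sign quat_sqnorm_conj_by s(1) p q p' q' by metis+
  then have "klein_rel (pants_angles (quat_conj_by s p) (quat_conj_by s q)) (pants_angles p' q')"
    using klein_rel_pants_angles_signs quat_sqnorm_conj_by s(1) p q by metis
  then show ?thesis by (simp add: pants_angles_conj_by s(1))
qed

lemma conj_rel_pants_rep_if_klein_rel:
  assumes p: "quat_sqnorm p = 1" and q: "quat_sqnorm q = 1"
    and p': "quat_sqnorm p' = 1" and q': "quat_sqnorm q' = 1"
    and "klein_rel (pants_angles p q) (pants_angles p' q')"
  shows "conj_rel (pants_rep (p, q)) (pants_rep (p', q'))"
proof -
  obtain p1 q1 where pq1: "p1 = p \<or> p1 = - p" "q1 = q \<or> q1 = - q"
    "pants_angles p' q' = pants_angles p1 q1"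
    using klein_rel_pants_anglesE[OF p q assms(5)] by blast
  have n1: "quat_sqnorm p1 = 1" "quat_sqnorm q1 = 1" using pq1(1,2) p q by (auto simp: quat_sqnorm_minus)
  obtain s where s: "quat_sqnorm s = 1" "p' = quat_conj_by s p1" "q' = quat_conj_by s q1"
    using unit_quat_pairs_conjugate[OF n1 p' q'] pants_angles_eqD[OF p' q' n1 pq1(3)] by metis
  have R: "rot_matrix p1 = rot_matrix p" "rot_matrix q1 = rot_matrix q"
    "rot_matrix (quat_cnj (quat_mult p1 q1)) = rot_matrix (quat_cnj (quat_mult p q))"
    using pq1(1,2) by (auto simp: rot_matrix_minus quat_mult_minus quat_cnj_minus)
  have "quat_cnj (quat_mult p' q') = quat_conj_by s (quat_cnj (quat_mult p1 q1))"
    by (simp add: s quat_conj_by_mult quat_cnj_conj_by)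
  then show ?thesis
    unfolding conj_rel_def pants_rep_def using s R rot_matrix_in_SO3[OF s(1)]
    by (auto simp: rot_matrix_conj_by simp del: quat_conj_by_def)
qed

lemma conj_rel_iff_klein_invariant:
  assumes "h \<in> hom_pants_SO3" "h' \<in> hom_pants_SO3"
  shows "conj_rel h h' \<longleftrightarrow> klein_invariant (rep_angles h) = klein_invariant (rep_angles h')"
proof -
  define p q p' q' where "p = quat_lift (fst h)" and "q = quat_lift (fst (snd h))"
    and "p' = quat_lift (fst h')" and "q' = quat_lift (fst (snd h'))"
  have "(p, q) \<in> unit_quat_pairs" "h = pants_rep (p, q)"
    "(p', q') \<in> unit_quat_pairs" "h' = pants_rep (p', q')"
    using hom_pants_SO3_lift assms unfolding p_def q_def p'_def q'_def by blast+
  moreover have "rep_angles h = pants_angles p q" "rep_angles h' = pants_angles p' q'"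
    by (simp_all add: rep_angles_def p_def q_def p'_def q'_def)
  ultimately show ?thesis
    using klein_rel_if_conj_rel_pants_rep[of p q p' q'] conj_rel_pants_rep_if_klein_rel[of p q p' q']
    by (simp add: unit_quat_pairs_def klein_rel_iff_invariant) blast
qed

lemma klein_invariant_rep_angles_pants_rep:
  "x \<in> unit_quat_pairs \<Longrightarrow>
    klein_invariant (rep_angles (pants_rep x)) = klein_invariant (pants_angles (fst x) (snd x))"
  using klein_rel_rep_angles_pants_rep by (simp add: klein_rel_iff_invariant)

lemma continuous_map_klein_invariant_rep_angles:
  "continuous_map (top_of_set hom_pants_SO3) euclidean (klein_invariant \<circ> rep_angles)"
proof (rule continuous_compose_quotient_map)
  show "quotient_map (top_of_set unit_quat_pairs) (top_of_set hom_pants_SO3) pants_rep"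
    by (rule continuous_imp_quotient_map)
      (auto simp: hom_pants_SO3_eq_image compact_space_subtopology compact_unit_quat_pairs
        Hausdorff_space_subtopology continuous_on_pants_rep)
  have "continuous_on unit_quat_pairs (\<lambda>x. klein_invariant (pants_angles (fst x) (snd x)))"
    by (rule continuous_on_compose2[OF continuous_on_klein_invariant continuous_on_pants_angles]) auto
  then show "continuous_map (top_of_set unit_quat_pairs) euclidean (klein_invariant \<circ> rep_angles \<circ> pants_rep)"
    by (simp add: continuous_on_eq klein_invariant_rep_angles_pants_rep)
qed

lemma klein_invariant_rep_angles_image:
  "(klein_invariant \<circ> rep_angles) ` hom_pants_SO3 = klein_invariant ` tetG"
proof
  show "(klein_invariant \<circ> rep_angles) ` hom_pants_SO3 \<subseteq> klein_invariant ` tetG"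
    using rep_angles_in_tetG by auto
  show "klein_invariant ` tetG \<subseteq> (klein_invariant \<circ> rep_angles) ` hom_pants_SO3"
  proof
    fix z assume "z \<in> klein_invariant ` tetG"
    then obtain p q where pq: "(p, q) \<in> unit_quat_pairs" "z = klein_invariant (pants_angles p q)"
      using pants_angles_surj by (fastforce simp: unit_quat_pairs_def)
    then show "z \<in> (klein_invariant \<circ> rep_angles) ` hom_pants_SO3"
      using klein_invariant_rep_angles_pants_rep[OF pq(1)] pants_rep_in_hom[OF pq(1)]
      by (metis comp_apply fst_conv snd_conv image_eqI)
  qed
qed

theorem mainTheorem5:
  shows "rep_pants_SO3 homeomorphic_space tetG_mod_V"
proof -
  have "compact hom_pants_SO3"
    unfolding hom_pants_SO3_eq_image
    by (rule compact_continuous_image[OF continuous_on_pants_rep compact_unit_quat_pairs])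
  then have "rep_pants_SO3 homeomorphic_space top_of_set ((klein_invariant \<circ> rep_angles) ` hom_pants_SO3)"
    unfolding rep_pants_SO3_def
    using quotient_topology_homeomorphic_image[OF _ _ continuous_map_klein_invariant_rep_angles]
    by (simp add: compact_space_subtopology conj_rel_iff_klein_invariant)
  moreover have "compact tetG" unfolding tetG_def by (simp add: compact_convex_hull)
  then have "tetG_mod_V homeomorphic_space top_of_set (klein_invariant ` tetG)"
    unfolding tetG_mod_V_def
    using quotient_topology_homeomorphic_image[of "top_of_set tetG" euclidean klein_invariant klein_rel]
    by (simp add: compact_space_subtopology continuous_on_klein_invariant klein_rel_iff_invariant)
  ultimately show ?thesis
    unfolding klein_invariant_rep_angles_image using homeomorphic_space_sym homeomorphic_space_trans by blast
qed

end
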